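(* Let $f\in C([0,1],\mathbb R)\cap C^2([0,1),\mathbb R)$, $R\in C([0,1],\mathbb R)\cap C^1([0,1),\mathbb R)$ and $\epsilon>0$, and assume that for all $w\in[0,1)$ $$f'(w)=(1-w)^{\epsilon-1}R(w),\qquad R'(w)>0.$$ Then $$\lim_{w\to1^-}\frac{f(1)-f(w)}{(1-w)^\epsilon}=\frac{R(1)}{\epsilon},\qquad \frac{d}{dw}\,\frac{f(1)-f(w)}{(1-w)^\epsilon}>0\quad\text{for all }w\in[0,1),$$ and consequently $$f(1)-f(0)<\frac{f(1)-f(w)}{(1-w)^\epsilon}<\frac{R(1)}{\epsilon}\qquad\text{for all }w\in(0,1).$$ *)

theory Defs
  imports "HOL-Analysis.Analysis"
begin

definition C1_on :: "real set \<Rightarrow> (real \<Rightarrow> real) \<Rightarrow> bool" where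
  "C1_on S g \<longleftrightarrow> (\<exists>g'. (\<forall>x\<in>S. (g has_real_derivative g' x) (at x within S)) \<and> continuous_on S g')"

definition C2_on :: "real set \<Rightarrow> (real \<Rightarrow> real) \<Rightarrow> bool" where
  "C2_on S g \<longleftrightarrow> (\<exists>g'. (\<forall>x\<in>S. (g has_real_derivative g' x) (at x within S)) \<and> C1_on S g')"

end

theory Submission
  imports Defs
begin

text \<open>
  Write \<open>g w = (f 1 - f w) / (1 - w) powr \<epsilon>\<close>. Since \<open>-(1 - v) powr \<epsilon> / \<epsilon>\<close> is an antiderivative
  of \<open>(1 - v) powr (\<epsilon> - 1)\<close> and \<open>R\<close> is strictly increasing, comparing derivatives on \<open>[w, 1]\<close>
  gives \<open>R w / \<epsilon> < g w < R 1 / \<epsilon>\<close>; continuity of \<open>R\<close> at \<open>1\<close> then yields the limit by squeezing.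
  A direct computation gives \<open>g' w = (\<epsilon> * g w - R w) / (1 - w)\<close>, which is positive by the lower
  bound, so \<open>g\<close> increases from \<open>g 0 = f 1 - f 0\<close>.
\<close>

lemma increment_less_increment_if_deriv_less:
  fixes F G F' G' :: "real \<Rightarrow> real"
  assumes "a < b" "continuous_on {a..b} F" "continuous_on {a..b} G"
    and "\<And>x. a < x \<Longrightarrow> x < b \<Longrightarrow> (F has_real_derivative F' x) (at x)"
    and "\<And>x. a < x \<Longrightarrow> x < b \<Longrightarrow> (G has_real_derivative G' x) (at x)"
    and "\<And>x. a < x \<Longrightarrow> x < b \<Longrightarrow> F' x < G' x"
  shows "F b - F a < G b - G a"
proof -
  have "(\<lambda>x. G x - F x) a < (\<lambda>x. G x - F x) b"
  proof (rule DERIV_pos_imp_increasing_open[OF \<open>a < b\<close>])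
    fix x assume "a < x" "x < b"
    then show "\<exists>y. ((\<lambda>x. G x - F x) has_real_derivative y) (at x) \<and> 0 < y"
      using assms(4-6) by (intro exI[of _ "G' x - F' x"]) (auto intro!: derivative_eq_intros)
  qed (intro continuous_intros assms(2,3))
  then show ?thesis by simp
qed

lemma one_minus_powr_antiderivative:
  fixes \<epsilon> c v :: real
  assumes "\<epsilon> > 0" "v < 1"
  shows "((\<lambda>v. - c * (1 - v) powr \<epsilon> / \<epsilon>) has_real_derivative (1 - v) powr (\<epsilon> - 1) * c) (at v)"
  using assms by (auto intro!: derivative_eq_intros)

lemma powr_weighted_increment_bounds:
  fixes f R :: "real \<Rightarrow> real" and \<epsilon> w :: real
  assumes "\<epsilon> > 0" "w < 1" "continuous_on {w..1} f"
    and f_deriv: "\<And>v. w < v \<Longrightarrow> v < 1 \<Longrightarrow>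
      (f has_real_derivative (1 - v) powr (\<epsilon> - 1) * R v) (at v)"
    and R_between: "\<And>v. w < v \<Longrightarrow> v < 1 \<Longrightarrow> R w < R v \<and> R v < R 1"
  shows "R w / \<epsilon> < (f 1 - f w) / (1 - w) powr \<epsilon>"
    and "(f 1 - f w) / (1 - w) powr \<epsilon> < R 1 / \<epsilon>"
proof -
  have weight_pos: "(1 - v) powr (\<epsilon> - 1) > 0" if "v < 1" for v
    using that by simp
  have antideriv_cont: "continuous_on {w..1} (\<lambda>v. - c * (1 - v) powr \<epsilon> / \<epsilon>)" for c
    using \<open>\<epsilon> > 0\<close> by (intro continuous_on_powr' continuous_intros) auto
  have "R w * (1 - w) powr \<epsilon> / \<epsilon> < f 1 - f w"
    using increment_less_increment_if_deriv_less[OF \<open>w < 1\<close> antideriv_cont \<open>continuous_on {w..1} f\<close>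
        one_minus_powr_antiderivative[OF \<open>\<epsilon> > 0\<close>] f_deriv]
      weight_pos R_between \<open>\<epsilon> > 0\<close> by simp
  moreover have "f 1 - f w < R 1 * (1 - w) powr \<epsilon> / \<epsilon>"
    using increment_less_increment_if_deriv_less[OF \<open>w < 1\<close> \<open>continuous_on {w..1} f\<close> antideriv_cont
        f_deriv one_minus_powr_antiderivative[OF \<open>\<epsilon> > 0\<close>]]
      weight_pos R_between \<open>\<epsilon> > 0\<close> by simp
  moreover have "(1 - w) powr \<epsilon> > 0"
    using \<open>w < 1\<close> by simp
  ultimately show "R w / \<epsilon> < (f 1 - f w) / (1 - w) powr \<epsilon>"
    and "(f 1 - f w) / (1 - w) powr \<epsilon> < R 1 / \<epsilon>"
    using \<open>\<epsilon> > 0\<close> by (simp_all add: field_simps)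
qed

lemma powr_normalized_increment_has_derivative:
  fixes f R :: "real \<Rightarrow> real" and \<epsilon> w :: real
  assumes "w < 1" "(f has_real_derivative (1 - w) powr (\<epsilon> - 1) * R w) (at w within S)"
  shows "((\<lambda>v. (f 1 - f v) / (1 - v) powr \<epsilon>) has_real_derivative
      (\<epsilon> * ((f 1 - f w) / (1 - w) powr \<epsilon>) - R w) / (1 - w)) (at w within S)"
proof -
  let ?P = "(1 - w) powr \<epsilon>"
  have "?P > 0" using \<open>w < 1\<close> by simp
  have weight: "(1 - w) powr (\<epsilon> - 1) = ?P / (1 - w)"
    using \<open>w < 1\<close> by (simp add: powr_diff)
  have "((\<lambda>v. (f 1 - f v) / (1 - v) powr \<epsilon>) has_real_derivative
      (- ((1 - w) powr (\<epsilon> - 1) * R w) * ?P - (f 1 - f w) * (- (\<epsilon> * (1 - w) powr (\<epsilon> - 1))))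
        / (?P * ?P)) (at w within S)"
    using assms by (auto intro!: derivative_eq_intros)
  also have "(- ((1 - w) powr (\<epsilon> - 1) * R w) * ?P - (f 1 - f w) * (- (\<epsilon> * (1 - w) powr (\<epsilon> - 1))))
        / (?P * ?P) = (\<epsilon> * ((f 1 - f w) / ?P) - R w) / (1 - w)"
  proof -
    have "(- (P / u * r) * P - d * (- (\<epsilon> * (P / u)))) / (P * P) = (\<epsilon> * (d / P) - r) / u"
      if "P > 0" "u > 0" for P u d r
      using that by (simp add: field_simps power2_eq_square)
    then show ?thesis
      using \<open>?P > 0\<close> \<open>w < 1\<close> unfolding weight by simp
  qed
  finally show ?thesis .
qed

lemma less_if_pos_deriv_within_atLeastLessThan:
  fixes g :: "real \<Rightarrow> real"
  assumes g_deriv: "\<And>x. x \<in> {a..<b} \<Longrightarrow> \<exists>D. (g has_real_derivative D) (at x within {a..<b}) \<and> D > 0"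
    and "a \<le> x" "x < y" "y < b"
  shows "g x < g y"
proof (rule DERIV_pos_imp_increasing_open[OF \<open>x < y\<close>])
  fix z assume "x < z" "z < y"
  then have "z \<in> interior {a..<b}"
    using assms(2-4) by auto
  then show "\<exists>D. (g has_real_derivative D) (at z) \<and> 0 < D"
    using g_deriv[of z] at_within_interior[of z "{a..<b}"] interior_subset by auto
next
  have "continuous_on {a..<b} g"
    unfolding continuous_on_eq_continuous_within
    using g_deriv DERIV_continuous by blast
  then show "continuous_on {x..y} g"
    by (rule continuous_on_subset) (use assms(2-4) in auto)
qed

theorem lemma5p1:
  fixes f R R' :: "real \<Rightarrow> real" and \<epsilon> :: real
  assumes f_cont: "continuous_on {0..1} f"
    and f_C2: "C2_on {0..<1} f"
    and R_cont: "continuous_on {0..1} R"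
    and R_C1: "C1_on {0..<1} R"
    and eps_pos: "\<epsilon> > 0"
    and f_deriv: "\<And>w. w \<in> {0..<1} \<Longrightarrow>
        (f has_real_derivative ((1 - w) powr (\<epsilon> - 1) * R w)) (at w within {0..<1})"
    and R_deriv: "\<And>w. w \<in> {0..<1} \<Longrightarrow> (R has_real_derivative R' w) (at w within {0..<1})"
    and R'_pos: "\<And>w. w \<in> {0..<1} \<Longrightarrow> R' w > 0"
  shows "((\<lambda>w. (f 1 - f w) / (1 - w) powr \<epsilon>) \<longlongrightarrow> R 1 / \<epsilon>) (at_left 1)
    \<and> (\<forall>w\<in>{0..<1}. \<exists>D. ((\<lambda>v. (f 1 - f v) / (1 - v) powr \<epsilon>)
             has_real_derivative D) (at w within {0..<1}) \<and> D > 0)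
    \<and> (\<forall>w\<in>{0<..<1}.
           f 1 - f 0 < (f 1 - f w) / (1 - w) powr \<epsilon> \<and> (f 1 - f w) / (1 - w) powr \<epsilon> < R 1 / \<epsilon>)"
proof -
  define g where "g w = (f 1 - f w) / (1 - w) powr \<epsilon>" for w
  have at_interior: "at v within {0..<1} = at v" if "0 < v" "v < 1" for v :: real
    using that by (intro at_within_interior) auto
  have R_less: "R x < R y" if "0 \<le> x" "x < y" "y \<le> 1" for x y
  proof (rule DERIV_pos_imp_increasing_open[OF \<open>x < y\<close>])
    fix v assume "x < v" "v < y"
    then show "\<exists>D. (R has_real_derivative D) (at v) \<and> 0 < D"
      using that R_deriv[of v] R'_pos[of v] at_interior[of v] by auto
  qed (rule continuous_on_subset[OF R_cont], use that in auto)
  have g_bounds: "R w / \<epsilon> < g w \<and> g w < R 1 / \<epsilon>" if "0 \<le> w" "w < 1" for w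
  proof -
    have "continuous_on {w..1} f"
      by (rule continuous_on_subset[OF f_cont]) (use that in auto)
    moreover have "(f has_real_derivative (1 - v) powr (\<epsilon> - 1) * R v) (at v)" if "w < v" "v < 1" for v
      using f_deriv[of v] at_interior[of v] \<open>0 \<le> w\<close> that by auto
    moreover have "R w < R v \<and> R v < R 1" if "w < v" "v < 1" for v
      using R_less \<open>0 \<le> w\<close> that by auto
    ultimately show ?thesis
      using powr_weighted_increment_bounds[OF eps_pos \<open>w < 1\<close>] unfolding g_def by blast
  qed
  have g_deriv: "\<exists>D. (g has_real_derivative D) (at w within {0..<1}) \<and> D > 0" if "w \<in> {0..<1}" for w
  proof -
    have "(g has_real_derivative (\<epsilon> * g w - R w) / (1 - w)) (at w within {0..<1})"
      using powr_normalized_increment_has_derivative[where R = R, OF _ f_deriv[OF that]] that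
      unfolding g_def[abs_def] by simp
    moreover have "(\<epsilon> * g w - R w) / (1 - w) > 0"
      using g_bounds[of w] that eps_pos by (simp add: field_simps)
    ultimately show ?thesis by blast
  qed
  have "(g \<longlongrightarrow> R 1 / \<epsilon>) (at_left 1)"
  proof (rule tendsto_sandwich[of "\<lambda>w. R w / \<epsilon>" _ _ "\<lambda>_. R 1 / \<epsilon>"])
    have "(R \<longlongrightarrow> R 1) (at 1 within {0..1})"
      using R_cont by (simp add: continuous_on_def)
    then have "(R \<longlongrightarrow> R 1) (at_left 1)"
      by (simp add: at_within_Icc_at_left)
    then show "((\<lambda>w. R w / \<epsilon>) \<longlongrightarrow> R 1 / \<epsilon>) (at_left 1)"
      by (rule tendsto_divide[OF _ tendsto_const]) (use eps_pos in simp)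
  qed (use eventually_at_left_real[OF zero_less_one] g_bounds
       in \<open>auto elim!: eventually_mono intro: less_imp_le\<close>)
  moreover have "g 0 < g w" if "0 < w" "w < 1" for w
    using less_if_pos_deriv_within_atLeastLessThan[OF g_deriv] that by simp
  ultimately show ?thesis
    using g_deriv g_bounds unfolding g_def by auto
qed

end
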